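(* Let $G=(V,E)$ be a connected graph, let $\mathcal{B}$ be the set of blocks of $G$ which are not cut edges of pendant paths of $G$, and let $\mu(v)$ denote the number of blocks containing the vertex $v$. Then $$Z_c(G)\geq\sum_{B\in\mathcal{B}}\delta(G[B])-\sum_{p\in R_2\cup R_3}(\mu(p)-1),$$ where $R_2=\{v\in V:\kappa(G-v)=2,\ p(v)=0\}$ and $R_3=\{v\in V:\kappa(G-v)\geq 3\}$.
   Context: A block is a maximal subgraph with no articulation point. $\kappa(H)$ is the number of connected components of $H$; $\delta(H)$ is the minimum degree of $H$. A pendant path attached to a vertex $v$ is a set $P\subset V$ such that $G[P]$ is a path component of $G-v$, one of whose ends is adjacent to $v$ in $G$; $p(v)$ is the number of pendant paths attached to $v$; a cut edge of a pendant path is an edge of the path $G[P\cup\{v\}]$. Zero forcing: given a set $S$ of initially colored vertices, if a colored vertex $u$ has exactly one uncolored neighbor $w$, then $w$ becomes colored; $S$ is a zero forcing set if repeated application colors all vertices. $Z_c(G)$ is the minimum size of a zero forcing set $S$ with $G[S]$ connected. *)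

theory Defs
  imports Main
begin

definition simple_graph :: "'a set \<Rightarrow> 'a set set \<Rightarrow> bool" where
  "simple_graph V E \<longleftrightarrow> finite V \<and>
     (\<forall>e\<in>E. \<exists>u v. u \<in> V \<and> v \<in> V \<and> u \<noteq> v \<and> e = {u, v})"

definition adj :: "'a set set \<Rightarrow> 'a \<Rightarrow> 'a \<Rightarrow> bool" where
  "adj E u v \<longleftrightarrow> u \<noteq> v \<and> {u, v} \<in> E"

definition ind :: "'a set set \<Rightarrow> 'a set \<Rightarrow> 'a set set" where
  "ind E S = {e \<in> E. e \<subseteq> S}"

definition del_edges :: "'a set set \<Rightarrow> 'a \<Rightarrow> 'a set set" where
  "del_edges E v = {e \<in> E. v \<notin> e}"

definition reach :: "'a set \<Rightarrow> 'a set set \<Rightarrow> 'a \<Rightarrow> 'a \<Rightarrow> bool" where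
  "reach V E = (\<lambda>x y. x \<in> V \<and> y \<in> V \<and> adj E x y)\<^sup>*\<^sup>*"

definition connected_graph :: "'a set \<Rightarrow> 'a set set \<Rightarrow> bool" where
  "connected_graph V E \<longleftrightarrow> V \<noteq> {} \<and> (\<forall>u\<in>V. \<forall>v\<in>V. reach V E u v)"

definition components :: "'a set \<Rightarrow> 'a set set \<Rightarrow> 'a set set" where
  "components V E = (\<lambda>v. {w \<in> V. reach V E v w}) ` V"

definition kappa :: "'a set \<Rightarrow> 'a set set \<Rightarrow> nat" where
  "kappa V E = card (components V E)"

definition articulation_point :: "'a set \<Rightarrow> 'a set set \<Rightarrow> 'a \<Rightarrow> bool" where
  "articulation_point V E v \<longleftrightarrow> v \<in> V \<and> kappa (V - {v}) (del_edges E v) > kappa V E"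

text \<open>Blocks, identified with their vertex sets (a maximal subgraph without articulation
  point is necessarily induced): maximal connected induced subgraphs without articulation point.\<close>
definition nonseparable :: "'a set \<Rightarrow> 'a set set \<Rightarrow> 'a set \<Rightarrow> bool" where
  "nonseparable V E S \<longleftrightarrow> S \<subseteq> V \<and> connected_graph S (ind E S) \<and>
     (\<forall>v\<in>S. \<not> articulation_point S (ind E S) v)"

definition block :: "'a set \<Rightarrow> 'a set set \<Rightarrow> 'a set \<Rightarrow> bool" where
  "block V E B \<longleftrightarrow> nonseparable V E B \<and> (\<forall>T. B \<subset> T \<longrightarrow> \<not> nonseparable V E T)"

definition mu :: "'a set \<Rightarrow> 'a set set \<Rightarrow> 'a \<Rightarrow> nat" where
  "mu V E v = card {B. block V E B \<and> v \<in> B}"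

definition min_degree :: "'a set \<Rightarrow> 'a set set \<Rightarrow> nat" where
  "min_degree S F = Min ((\<lambda>u. card {w \<in> S. adj F u w}) ` S)"

text \<open>Pendant path attached to v: P is a connected component of G - v, and G[P \<union> {v}]
  is a path having v as an end (so G[P] is a path one of whose ends is adjacent to v).\<close>
definition path_edges :: "'a list \<Rightarrow> 'a set set" where
  "path_edges ys = {{ys ! i, ys ! Suc i} | i. Suc i < length ys}"

definition pendant_path :: "'a set \<Rightarrow> 'a set set \<Rightarrow> 'a \<Rightarrow> 'a set \<Rightarrow> bool" where
  "pendant_path V E v P \<longleftrightarrow> v \<in> V \<and> P \<in> components (V - {v}) (del_edges E v) \<and>
     (\<exists>xs. xs \<noteq> [] \<and> distinct (v # xs) \<and> set xs = P \<and>
           ind E (P \<union> {v}) = path_edges (v # xs))"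

definition num_pendant_paths :: "'a set \<Rightarrow> 'a set set \<Rightarrow> 'a \<Rightarrow> nat" where
  "num_pendant_paths V E v = card {P. pendant_path V E v P}"

definition pendant_cut_edge :: "'a set \<Rightarrow> 'a set set \<Rightarrow> 'a set \<Rightarrow> bool" where
  "pendant_cut_edge V E e \<longleftrightarrow> (\<exists>v P. pendant_path V E v P \<and> e \<in> ind E (P \<union> {v}))"

inductive_set forced :: "'a set \<Rightarrow> 'a set set \<Rightarrow> 'a set \<Rightarrow> 'a set"
  for V :: "'a set" and E :: "'a set set" and S :: "'a set" where
  init: "x \<in> S \<Longrightarrow> x \<in> forced V E S"
| force: "\<lbrakk>u \<in> forced V E S; w \<in> V; adj E u w;
           \<forall>x\<in>V. adj E u x \<and> x \<noteq> w \<longrightarrow> x \<in> forced V E S\<rbrakk> \<Longrightarrow> w \<in> forced V E S"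

definition zero_forcing_set :: "'a set \<Rightarrow> 'a set set \<Rightarrow> 'a set \<Rightarrow> bool" where
  "zero_forcing_set V E S \<longleftrightarrow> S \<subseteq> V \<and> forced V E S = V"

definition Zc :: "'a set \<Rightarrow> 'a set set \<Rightarrow> nat" where
  "Zc V E = (LEAST k. \<exists>S. zero_forcing_set V E S \<and> connected_graph S (ind E S) \<and> card S = k)"

end

theory Submission
  imports Defs "HOL-Library.Transitive_Closure_Table"
begin

text \<open>
  Fix a minimum connected zero forcing set S and colour in parallel rounds, so that every
  vertex y outside S is forced by some u all of whose other neighbours were coloured before y.
  In a block B call a vertex deficient if it lies in S or is not forced by a vertex of B.
  The first non-deficient vertex of B is forced by some u in B whose other neighbours in B
  are all deficient, so \<delta>(G[B]) is at most the number of deficient vertices of B.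

  Summing over the blocks of \<B>, charge each vertex v with 1 if v \<in> S plus \<mu>(v) - 1 if
  v \<in> R2 \<union> R3. A vertex is deficient in at most \<mu>(v) blocks, and in at most \<mu>(v) - 1 if
  v \<notin> S (not in the block of its forcing edge). A vertex outside R2 \<union> R3 lies in a single
  block, or it is the root of a pendant path and lies in a single block of \<B>. Hence v is
  deficient more often than charged only if it is such a root, v \<notin> S, and v is deficient
  somewhere; its forcer then lies on the pendant path, which therefore contains S. There is
  at most one such root, and S pays for it: lying on a pendant path, the vertices of S are
  deficient in no block of \<B>.
\<close>

section \<open>Reachability and components\<close>

lemma adj_commute: "adj E a b \<longleftrightarrow> adj E b a"
  by (auto simp: adj_def insert_commute)

definition adj_on :: "'a set \<Rightarrow> 'a set set \<Rightarrow> 'a \<Rightarrow> 'a \<Rightarrow> bool" where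
  "adj_on W E x y \<longleftrightarrow> x \<in> W \<and> y \<in> W \<and> adj E x y"

lemma reach_eq_rtranclp_adj_on: "reach W E = (adj_on W E)\<^sup>*\<^sup>*"
  by (simp add: reach_def adj_on_def [abs_def])

lemma reach_cong:
  assumes "\<And>a b. a \<in> W \<Longrightarrow> b \<in> W \<Longrightarrow> adj F a b \<longleftrightarrow> adj E a b"
  shows "reach W F = reach W E"
proof -
  have "adj_on W F = adj_on W E"
    using assms by (auto simp: adj_on_def fun_eq_iff)
  then show ?thesis by (simp add: reach_eq_rtranclp_adj_on)
qed

lemma reach_ind: "W \<subseteq> S \<Longrightarrow> reach W (ind E S) = reach W E"
  by (rule reach_cong) (auto simp: adj_def ind_def)

lemma reach_del_edges: "reach (V - {v}) (del_edges E v) = reach (V - {v}) E"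
  by (rule reach_cong) (auto simp: adj_def del_edges_def)

lemma reach_refl: "reach W E a a"
  by (simp add: reach_def)

lemma reach_edge: "a \<in> W \<Longrightarrow> b \<in> W \<Longrightarrow> adj E a b \<Longrightarrow> reach W E a b"
  by (simp add: reach_def r_into_rtranclp)

lemma reach_trans: "reach W E a b \<Longrightarrow> reach W E b c \<Longrightarrow> reach W E a c"
  by (simp add: reach_def)

lemma reach_step: "reach W E a b \<Longrightarrow> b \<in> W \<Longrightarrow> c \<in> W \<Longrightarrow> adj E b c \<Longrightarrow> reach W E a c"
  using reach_edge reach_trans by metis

lemma reach_sym: "reach W E a b \<Longrightarrow> reach W E b a"
  unfolding reach_eq_rtranclp_adj_on
proof (induction rule: rtranclp_induct)
  case (step b c)
  then have "(adj_on W E)\<^sup>*\<^sup>* c b"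
    by (auto simp: adj_on_def adj_commute)
  with step.IH show ?case by simp
qed simp

lemma reach_mono: "reach W E a b \<Longrightarrow> W \<subseteq> W' \<Longrightarrow> reach W' E a b"
  unfolding reach_def
  by (induction rule: rtranclp_induct) (auto intro: rtranclp.rtrancl_into_rtrancl)

lemma reach_imp_adj_first: "reach W E a b \<Longrightarrow> a \<noteq> b \<Longrightarrow> \<exists>c\<in>W. adj E a c"
  unfolding reach_def by (induction rule: converse_rtranclp_induct) auto

lemma reach_in_component:
  assumes "reach W E a b"
  shows "reach {w \<in> W. reach W E a w} E a b"
  using assms
proof (induction rule: rtranclp_induct[of "adj_on W E", folded reach_eq_rtranclp_adj_on,
      consumes 1, case_names base step])
  case (step b c)
  then have "reach W E a c"
    by (auto simp: adj_on_def intro: reach_step)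
  with step have "reach {w \<in> W. reach W E a w} E b c"
    by (intro reach_edge) (auto simp: adj_on_def)
  with step.IH show ?case by (rule reach_trans)
qed (rule reach_refl)

lemma reach_distinct_path:
  assumes "reach W E a b"
  obtains xs where "rtrancl_path (adj_on W E) a xs b" "distinct (a # xs)"
  using assms rtrancl_path_distinct
  by (metis reach_eq_rtranclp_adj_on rtranclp_eq_rtrancl_path)

lemma rtrancl_path_adj_on_subset: "rtrancl_path (adj_on W E) a xs b \<Longrightarrow> set xs \<subseteq> W"
  by (induction rule: rtrancl_path.induct) (auto simp: adj_on_def)

lemma rtrancl_path_last: "rtrancl_path r a xs b \<Longrightarrow> b \<in> set (a # xs)"
  by (induction rule: rtrancl_path.induct) auto

lemma rtrancl_path_split:
  assumes "rtrancl_path r a (ys @ w # zs) b"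
  shows "rtrancl_path r a (ys @ [w]) w" "rtrancl_path r w zs b"
  using assms by (auto elim: rtrancl_path_appendE)

lemma reach_if_rtrancl_path:
  assumes "rtrancl_path (adj_on W E) a xs b" "set (a # xs) \<subseteq> W'"
  shows "reach W' E a b"
  using assms
proof (induction rule: rtrancl_path.induct)
  case (step a c xs b)
  then have "reach W' E a c"
    by (intro reach_edge) (auto simp: adj_on_def)
  with step show ?case by (auto intro: reach_trans)
qed (simp add: reach_refl)

lemma component_eq:
  assumes "C \<in> components W E" "a \<in> C"
  shows "C = {w \<in> W. reach W E a w}"
proof -
  obtain v where v: "v \<in> W" "C = {w \<in> W. reach W E v w}"
    using assms(1) by (auto simp: components_def)
  then have "reach W E v a" using assms(2) by auto
  with v show ?thesis by (auto intro: reach_trans reach_sym)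
qed

lemma components_cong: "reach W F = reach W E \<Longrightarrow> components W F = components W E"
  by (simp add: components_def)

lemma kappa_cong: "reach W F = reach W E \<Longrightarrow> kappa W F = kappa W E"
  by (simp add: kappa_def components_def)

lemma components_del_edges: "components (V - {v}) (del_edges E v) = components (V - {v}) E"
  by (rule components_cong[OF reach_del_edges])

lemma kappa_del_edges: "kappa (V - {v}) (del_edges E v) = kappa (V - {v}) E"
  by (rule kappa_cong[OF reach_del_edges])

lemma kappa_empty: "kappa {} E = 0"
  by (simp add: kappa_def components_def)

lemma kappa_eq_1:
  assumes "W \<noteq> {}" "\<forall>a\<in>W. \<forall>b\<in>W. reach W E a b"
  shows "kappa W E = 1"
proof -
  have "components W E = {W}"
    using assms by (auto simp: components_def intro: reach_sym)
  then show ?thesis by (simp add: kappa_def)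
qed

lemma reach_if_kappa_le_1:
  assumes "finite W" "kappa W E \<le> 1" "a \<in> W" "b \<in> W"
  shows "reach W E a b"
proof (rule ccontr)
  define A where "A = {w \<in> W. reach W E a w}"
  define B where "B = {w \<in> W. reach W E b w}"
  assume "\<not> reach W E a b"
  then have "A \<noteq> B"
    using assms(4) reach_refl[of W E b] by (auto simp: A_def B_def)
  moreover have "{A, B} \<subseteq> components W E"
    using assms(3,4) by (auto simp: components_def A_def B_def)
  then have "card {A, B} \<le> kappa W E"
    using assms(1) unfolding kappa_def components_def by (intro card_mono) auto
  ultimately have "card {A, B} = 2"
    by simp
  with \<open>card {A, B} \<le> kappa W E\<close> assms(2) show False
    by linarith
qed

lemma reach_if_kappa_eq_2:
  assumes "kappa W E = 2" "P \<in> components W E"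
    and "a \<in> W" "a \<notin> P" "b \<in> W" "b \<notin> P"
  shows "reach W E a b"
proof -
  define A where "A = {w \<in> W. reach W E a w}"
  define B where "B = {w \<in> W. reach W E b w}"
  have C: "A \<in> components W E" "B \<in> components W E"
    using assms(3,5) by (auto simp: components_def A_def B_def)
  have "a \<in> A" "b \<in> B"
    using assms(3,5) by (auto simp: reach_refl A_def B_def)
  then have "A \<noteq> P" "B \<noteq> P"
    using assms(4,6) by auto
  moreover obtain C D where CD: "components W E = {C, D}"
    using assms(1) unfolding kappa_def by (meson card_2_iff)
  ultimately have "A = B"
    using C assms(2) unfolding CD by auto
  with \<open>b \<in> B\<close> show ?thesis
    unfolding A_def by blast
qed

lemma adj_along_path:
  assumes "distinct ys" "ind E (set ys) = path_edges ys"
    and "i < length ys" "w \<in> set ys" "adj E (ys ! i) w"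
  shows "(0 < i \<and> w = ys ! (i - 1)) \<or> (Suc i < length ys \<and> w = ys ! Suc i)"
proof -
  have "{ys ! i, w} \<in> ind E (set ys)"
    using assms(3-5) by (auto simp: ind_def adj_def)
  then obtain j where j: "{ys ! i, w} = {ys ! j, ys ! Suc j}" "Suc j < length ys"
    by (auto simp: assms(2) path_edges_def)
  have "ys ! i \<noteq> w"
    using assms(5) by (auto simp: adj_def)
  with j consider "ys ! i = ys ! j" "w = ys ! Suc j" | "ys ! i = ys ! Suc j" "w = ys ! j"
    by (metis doubleton_eq_iff)
  then show ?thesis
    using assms(1,3) j(2) by cases (auto simp: nth_eq_iff_index_eq)
qed

section \<open>Nonseparable sets and blocks\<close>

definition connected_on :: "'a set set \<Rightarrow> 'a set \<Rightarrow> bool" where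
  "connected_on E S \<longleftrightarrow> (\<forall>a\<in>S. \<forall>b\<in>S. reach S E a b)"

lemma connected_on_iff_kappa_le_1:
  assumes "finite S"
  shows "connected_on E S \<longleftrightarrow> kappa S E \<le> 1"
proof
  assume "connected_on E S"
  then show "kappa S E \<le> 1"
    using kappa_eq_1[of S E] by (cases "S = {}") (auto simp: connected_on_def kappa_empty)
next
  assume "kappa S E \<le> 1"
  with assms show "connected_on E S"
    by (auto simp: connected_on_def intro: reach_if_kappa_le_1)
qed

locale finite_simple_graph =
  fixes V :: "'a set" and E :: "'a set set"
  assumes simple: "simple_graph V E"
begin

lemma finite_vertices: "finite V"
  using simple by (simp add: simple_graph_def)

lemma adj_vertices: "adj E a b \<Longrightarrow> a \<in> V \<and> b \<in> V"
  using simple unfolding simple_graph_def adj_def by (metis doubleton_eq_iff)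

lemma nonseparable_iff:
  "nonseparable V E S \<longleftrightarrow>
     S \<subseteq> V \<and> S \<noteq> {} \<and> connected_on E S \<and> (\<forall>v\<in>S. connected_on E (S - {v}))"
proof (cases "S \<subseteq> V")
  case True
  then have fin: "finite S"
    using finite_vertices finite_subset by blast
  have reach_S: "reach S (ind E S) = reach S E"
    by (simp add: reach_ind)
  have reach_S_v: "reach (S - {v}) (del_edges (ind E S) v) = reach (S - {v}) E" for v
    by (simp add: reach_del_edges reach_ind Diff_subset)
  have connected: "connected_graph S (ind E S) \<longleftrightarrow> S \<noteq> {} \<and> connected_on E S"
    by (simp add: connected_graph_def connected_on_def reach_S)
  have kappa_S: "kappa S (ind E S) = 1" if "S \<noteq> {}" "connected_on E S"
    using that kappa_eq_1[of S "ind E S"] by (simp add: reach_S connected_on_def)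
  have "articulation_point S (ind E S) v \<longleftrightarrow> \<not> connected_on E (S - {v})"
    if "S \<noteq> {}" "connected_on E S" "v \<in> S" for v
    using that fin kappa_S kappa_cong[OF reach_S_v] connected_on_iff_kappa_le_1[of "S - {v}"]
    by (auto simp: articulation_point_def)
  with True connected show ?thesis
    unfolding nonseparable_def by auto
qed (simp add: nonseparable_def)

lemma nonseparableD:
  assumes "nonseparable V E S"
  shows "S \<subseteq> V" "S \<noteq> {}" "a \<in> S \<Longrightarrow> b \<in> S \<Longrightarrow> reach S E a b"
    and "a \<in> S - {v} \<Longrightarrow> b \<in> S - {v} \<Longrightarrow> reach (S - {v}) E a b"
  using assms by (cases "v \<in> S"; auto simp: nonseparable_iff connected_on_def)+

lemma nonseparable_singleton: "x \<in> V \<Longrightarrow> nonseparable V E {x}"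
  by (auto simp: nonseparable_iff connected_on_def reach_refl)

lemma nonseparable_edge:
  assumes "adj E a b"
  shows "nonseparable V E {a, b}"
proof -
  have "reach {a, b} E a b"
    using assms by (intro reach_edge) auto
  with assms show ?thesis
    by (auto simp: nonseparable_iff connected_on_def reach_refl adj_vertices dest: reach_sym)
qed

lemma block_nonseparable: "block V E B \<Longrightarrow> nonseparable V E B"
  by (simp add: block_def)

lemma block_subset: "block V E B \<Longrightarrow> B \<subseteq> V"
  by (simp add: block_def nonseparable_def)

lemma block_maximal: "block V E B \<Longrightarrow> nonseparable V E T \<Longrightarrow> B \<subseteq> T \<Longrightarrow> T = B"
  by (auto simp: block_def)

lemma finite_block: "block V E B \<Longrightarrow> finite B"
  using block_subset finite_vertices finite_subset by blast

lemma finite_blocks: "finite {B. block V E B \<and> P B}"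
  by (rule finite_subset[of _ "Pow V"]) (auto simp: finite_vertices dest: block_subset)

lemma exists_block_superset:
  assumes "nonseparable V E A"
  obtains B where "block V E B" "A \<subseteq> B"
proof -
  let ?F = "{T. nonseparable V E T \<and> A \<subseteq> T}"
  have "card T < Suc (card V)" if "T \<in> ?F" for T
    using that card_mono[OF finite_vertices] by (auto simp: nonseparable_def less_Suc_eq_le)
  then obtain B where B: "B \<in> ?F" "\<And>T. T \<in> ?F \<Longrightarrow> card T \<le> card B"
    using ex_has_greatest_nat[of "\<lambda>T. T \<in> ?F" A card "Suc (card V)"] assms by blast
  have "\<not> nonseparable V E T" if "B \<subset> T" for T
  proof
    assume "nonseparable V E T"
    then have "card B < card T"
      using that finite_vertices
      by (intro psubset_card_mono) (auto dest: nonseparableD(1) finite_subset)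
    moreover have "T \<in> ?F"
      using B(1) \<open>nonseparable V E T\<close> that by auto
    ultimately show False
      using B(2) by (simp add: leD)
  qed
  with B that show ?thesis
    by (auto simp: block_def)
qed

lemma mu_ge_1: "x \<in> V \<Longrightarrow> 1 \<le> mu V E x"
proof -
  assume "x \<in> V"
  then obtain B where "block V E B" "x \<in> B"
    by (auto intro: exists_block_superset[OF nonseparable_singleton])
  then have "{B. block V E B \<and> x \<in> B} \<noteq> {}"
    by blast
  then show ?thesis
    unfolding mu_def using finite_blocks by (simp add: Suc_le_eq card_gt_0_iff)
qed

lemma block_other_vertex:
  assumes "block V E B" "s \<in> B" "adj E s t"
  obtains b where "b \<in> B" "b \<noteq> s"
proof -
  have "{s, t} = B" if "B = {s}"
    using assms that by (intro block_maximal nonseparable_edge) auto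
  moreover have "s \<noteq> t"
    using assms(3) by (auto simp: adj_def)
  ultimately show ?thesis
    using assms(2) that by blast
qed

lemma two_le_card_block:
  assumes "block V E B" "s \<in> B" "b \<in> B" "b \<noteq> s"
  shows "2 \<le> card B"
proof -
  have "card {s, b} \<le> card B"
    using assms by (intro card_mono finite_block) auto
  with assms(4) show ?thesis
    by simp
qed

lemma nonseparable_reach_avoiding:
  assumes "nonseparable V E B" "B \<subseteq> T" "u \<in> B - {v}" "u' \<in> B - {v}"
  shows "reach (T - {v}) E u u'"
  using nonseparableD(4)[OF assms(1,3,4)] by (rule reach_mono) (use assms(2) in blast)

text \<open>Without x, everything in B1 \<union> B2 \<union> set xs is joined to a along the path; without any
  other vertex v, everything is joined to x, leaving the path on the side away from v.\<close>

context
  fixes B1 B2 x a b xs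
  assumes B1: "nonseparable V E B1" and B2: "nonseparable V E B2"
    and x: "x \<in> B1" "x \<in> B2" and a: "a \<in> B1" "a \<noteq> x" and b: "b \<in> B2" "b \<noteq> x"
    and path: "rtrancl_path (adj_on (V - {x}) E) a xs b" and dist: "distinct (a # xs)"
begin

lemma union_path_reach_without_x:
  assumes w: "w \<in> B1 \<union> B2 \<union> set xs - {x}"
  shows "reach (B1 \<union> B2 \<union> set xs - {x}) E w a"
proof -
  let ?T = "B1 \<union> B2 \<union> set xs"
  have xs: "set xs \<subseteq> V - {x}"
    using path by (rule rtrancl_path_adj_on_subset)
  consider "w \<in> B1" | "w \<in> B2" | "w \<in> set xs"
    using w by blast
  then show ?thesis
  proof cases
    case 1
    with w a show ?thesis
      by (intro nonseparable_reach_avoiding[OF B1]) auto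
  next
    case 2
    with w b have "reach (?T - {x}) E w b"
      by (intro nonseparable_reach_avoiding[OF B2]) auto
    moreover have "reach (?T - {x}) E a b"
      by (rule reach_if_rtrancl_path[OF path]) (use a xs in auto)
    ultimately show ?thesis
      by (rule reach_trans[OF _ reach_sym])
  next
    case 3
    then obtain ys zs where split: "xs = ys @ w # zs"
      by (meson split_list)
    have "reach (?T - {x}) E a w"
      using rtrancl_path_split(1)[OF path[unfolded split]]
      by (rule reach_if_rtrancl_path) (use split a xs w in auto)
    then show ?thesis
      by (rule reach_sym)
  qed
qed

lemma union_path_reach_without_other:
  assumes v: "v \<in> B1 \<union> B2 \<union> set xs" "v \<noteq> x" and w: "w \<in> B1 \<union> B2 \<union> set xs - {v}"
  shows "reach (B1 \<union> B2 \<union> set xs - {v}) E w x"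
proof -
  let ?T = "B1 \<union> B2 \<union> set xs"
  consider "w \<in> B1" | "w \<in> B2" | "w \<in> set xs"
    using w by blast
  then show ?thesis
  proof cases
    case 3
    then obtain ys zs where split: "xs = ys @ w # zs"
      by (meson split_list)
    note subpaths = rtrancl_path_split[OF path[unfolded split]]
    show ?thesis
    proof (cases "v \<in> set (a # ys)")
      case False
      have "reach (?T - {v}) E a w"
        using subpaths(1) by (rule reach_if_rtrancl_path) (use False split w a in auto)
      moreover have "reach (?T - {v}) E a x"
        using False a x v by (intro nonseparable_reach_avoiding[OF B1]) auto
      ultimately show ?thesis
        by (rule reach_trans[OF reach_sym])
    next
      case True
      then have "v \<notin> set (w # zs)"
        using dist split w by auto
      moreover have "b \<in> set (w # zs)"
        using subpaths(2) by (rule rtrancl_path_last)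
      ultimately have "reach (?T - {v}) E b x"
        using b x v by (intro nonseparable_reach_avoiding[OF B2]) auto
      moreover have "reach (?T - {v}) E w b"
        using subpaths(2) by (rule reach_if_rtrancl_path)
          (use split \<open>v \<notin> set (w # zs)\<close> in auto)
      ultimately show ?thesis
        by (rule reach_trans[rotated])
    qed
  qed (use w x v in
      \<open>auto intro: nonseparable_reach_avoiding[OF B1] nonseparable_reach_avoiding[OF B2]\<close>)
qed

lemma nonseparable_union_path: "nonseparable V E (B1 \<union> B2 \<union> set xs)"
proof -
  let ?T = "B1 \<union> B2 \<union> set xs"
  have to_a: "reach ?T E w a" if "w \<in> ?T" for w
  proof (cases "w = x")
    case True
    then show ?thesis
      using nonseparableD(3)[OF B1 x(1) a(1)] by (rule_tac reach_mono) auto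
  next
    case False
    with that union_path_reach_without_x show ?thesis
      by (blast intro: reach_mono)
  qed
  have "reach (?T - {v}) E p q" if "v \<in> ?T" "p \<in> ?T - {v}" "q \<in> ?T - {v}" for v p q
  proof (cases "v = x")
    case True
    with that show ?thesis
      using reach_trans[OF union_path_reach_without_x reach_sym[OF union_path_reach_without_x]]
      by simp
  next
    case False
    with that show ?thesis
      using reach_trans[OF union_path_reach_without_other
          reach_sym[OF union_path_reach_without_other]]
      by simp
  qed
  moreover have "reach ?T E p q" if "p \<in> ?T" "q \<in> ?T" for p q
    using that reach_trans[OF to_a reach_sym[OF to_a]] by simp
  moreover have "set xs \<subseteq> V"
    using rtrancl_path_adj_on_subset[OF path] by blast
  then have "?T \<subseteq> V"
    using nonseparableD(1)[OF B1] nonseparableD(1)[OF B2] by blast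
  ultimately show ?thesis
    unfolding nonseparable_iff connected_on_def using x by blast
qed

end

lemma block_eq_if_reach_avoiding:
  assumes "block V E B1" "block V E B2" "x \<in> B1" "x \<in> B2"
    and "a \<in> B1" "a \<noteq> x" "b \<in> B2" "b \<noteq> x" and "reach (V - {x}) E a b"
  shows "B1 = B2"
proof -
  obtain xs where "rtrancl_path (adj_on (V - {x}) E) a xs b" "distinct (a # xs)"
    using assms(9) by (rule reach_distinct_path)
  then have "nonseparable V E (B1 \<union> B2 \<union> set xs)"
    using assms(1-8) by (intro nonseparable_union_path) (auto simp: block_def)
  then have "B1 \<union> B2 \<union> set xs = B1" "B1 \<union> B2 \<union> set xs = B2"
    by (auto intro!: block_maximal[OF assms(1)] block_maximal[OF assms(2)])
  then show ?thesis
    by simp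
qed

lemma mu_le_1_if_kappa_le_1:
  assumes "x \<in> V" "kappa (V - {x}) E \<le> 1"
  shows "mu V E x \<le> 1"
proof -
  have "B1 = B2" if B1: "block V E B1" "x \<in> B1" and B2: "block V E B2" "x \<in> B2" for B1 B2
  proof -
    consider "B1 \<subseteq> {x}" | "B2 \<subseteq> {x}" | a b where "a \<in> B1" "a \<noteq> x" "b \<in> B2" "b \<noteq> x"
      by blast
    then show ?thesis
    proof cases
      case 1
      with B1 B2 show ?thesis
        by (intro block_maximal[OF B1(1), symmetric]) (auto simp: block_def)
    next
      case 2
      with B1 B2 show ?thesis
        by (intro block_maximal[OF B2(1)]) (auto simp: block_def)
    next
      case 3
      moreover have "reach (V - {x}) E a b"
        using 3 assms(2) block_subset[OF B1(1)] block_subset[OF B2(1)] finite_vertices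
        by (intro reach_if_kappa_le_1) auto
      ultimately show ?thesis
        using B1 B2 by (intro block_eq_if_reach_avoiding) 
    qed
  qed
  then show ?thesis
    unfolding mu_def using finite_blocks by (auto simp: card_le_Suc0_iff_eq)
qed

section \<open>Pendant paths\<close>

lemma nonseparable_eq_edge_if_unique_adj:
  assumes B: "nonseparable V E B" and u: "u \<in> B" and card: "2 \<le> card B"
    and unique: "\<And>c. c \<in> B \<Longrightarrow> adj E u c \<Longrightarrow> c = w"
  shows "B = {u, w}" "adj E u w"
proof -
  have "B \<noteq> {u}"
    using card by auto
  with u obtain b where "b \<in> B" "b \<noteq> u"
    by blast
  then have "\<exists>c\<in>B. adj E u c"
    using reach_imp_adj_first[OF nonseparableD(3)[OF B u]] by simp
  with unique have w: "w \<in> B" "adj E u w" "u \<noteq> w"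
    by (auto simp: adj_def)
  have "z \<in> {u, w}" if "z \<in> B" for z
  proof (rule ccontr)
    assume "z \<notin> {u, w}"
    then have "u \<in> B - {w}" "z \<in> B - {w}"
      using that u w(3) by auto
    then have "reach (B - {w}) E u z"
      by (rule nonseparableD(4)[OF B])
    moreover have "u \<noteq> z"
      using \<open>z \<notin> {u, w}\<close> by blast
    ultimately have "\<exists>c\<in>B - {w}. adj E u c"
      by (rule reach_imp_adj_first)
    with unique show False
      by blast
  qed
  with u w(1) show "B = {u, w}"
    by blast
  from w(2) show "adj E u w" .
qed

lemma nonseparable_in_path_is_edge:
  assumes B: "nonseparable V E B" and sub: "B \<subseteq> set ys" and card: "2 \<le> card B"
    and dist: "distinct ys" and path: "ind E (set ys) = path_edges ys"
  shows "B \<in> ind E (set ys)"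
proof -
  define I where "I = {i. i < length ys \<and> ys ! i \<in> B}"
  obtain b where "b \<in> B"
    using nonseparableD(2)[OF B] by blast
  then obtain i where "i < length ys" "ys ! i = b"
    using sub by (meson in_set_conv_nth subsetD)
  with \<open>b \<in> B\<close> have "i \<in> I"
    by (simp add: I_def)
  moreover have "finite I"
    by (simp add: I_def)
  ultimately obtain m where m: "m \<in> I" "\<And>i. i \<in> I \<Longrightarrow> i \<le> m"
    using Max_in Max_ge by blast
  then have u: "ys ! m \<in> B" "m < length ys" "Suc m \<notin> I"
    by (fastforce simp: I_def)+
  have "c = ys ! (m - 1)" if "c \<in> B" "adj E (ys ! m) c" for c
    using adj_along_path[OF dist path u(2), of c] that sub u(3) by (auto simp: I_def)
  then have "B = {ys ! m, ys ! (m - 1)}" "adj E (ys ! m) (ys ! (m - 1))"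
    using nonseparable_eq_edge_if_unique_adj[OF B u(1) card] by blast+
  with sub show ?thesis
    by (auto simp: ind_def adj_def)
qed

lemma pendant_path_root: "pendant_path V E x P \<Longrightarrow> x \<in> V"
  by (simp add: pendant_path_def)

lemma pendant_path_component:
  assumes "pendant_path V E x P" "s \<in> P"
  shows "P = {w \<in> V - {x}. reach (V - {x}) E s w}"
proof -
  have "P \<in> components (V - {x}) E"
    using assms(1) by (simp add: pendant_path_def components_del_edges)
  then show ?thesis
    using assms(2) by (rule component_eq)
qed

lemma pendant_path_subset: "pendant_path V E x P \<Longrightarrow> P \<subseteq> V - {x}"
  using pendant_path_component by blast

lemma pendant_path_root_adj:
  assumes "pendant_path V E x P"
  obtains x1 where "x1 \<in> P" "adj E x x1"
proof -
  obtain xs where xs: "xs \<noteq> []" "distinct (x # xs)" "set xs = P"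
    "ind E (P \<union> {x}) = path_edges (x # xs)"
    using assms by (auto simp: pendant_path_def)
  have "{x, hd xs} \<in> path_edges (x # xs)"
    unfolding path_edges_def using xs(1) by (auto intro!: exI[of _ 0] simp: hd_conv_nth)
  then have "{x, hd xs} \<in> E"
    using xs(4) by (auto simp: ind_def)
  moreover have "x \<noteq> hd xs" "hd xs \<in> P"
    using xs(1-3) by (cases xs; auto)+
  ultimately show ?thesis
    using that by (auto simp: adj_def)
qed

lemma pendant_path_vertex_adj:
  assumes "pendant_path V E x P" "z \<in> P"
  obtains t where "adj E z t"
proof -
  obtain x1 where x1: "x1 \<in> P" "adj E x x1"
    using assms(1) by (rule pendant_path_root_adj)
  show ?thesis
  proof (cases "z = x1")
    case True
    with x1(2) that show ?thesis
      by (simp add: adj_commute)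
  next
    case False
    have "reach (V - {x}) E z x1"
      using pendant_path_component[OF assms] x1(1) by blast
    from this False have "\<exists>t\<in>V - {x}. adj E z t"
      by (rule reach_imp_adj_first)
    with that show ?thesis
      by blast
  qed
qed

lemma pendant_cut_edge_if_meets_pendant_path:
  assumes pp: "pendant_path V E x P" and B: "nonseparable V E B"
    and s: "s \<in> B" "s \<in> P" and card: "2 \<le> card B"
  shows "pendant_cut_edge V E B"
proof -
  obtain xs where xs: "distinct (x # xs)" "set xs = P" "ind E (P \<union> {x}) = path_edges (x # xs)"
    using pp by (auto simp: pendant_path_def)
  have P: "P = {w \<in> V - {x}. reach (V - {x}) E s w}"
    using pendant_path_component[OF pp s(2)] .
  have "z \<in> P" if "z \<in> B" "z \<noteq> x" for z
  proof -
    have "reach (B - {x}) E s z"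
      using nonseparableD(4)[OF B] that s P by blast
    then have "reach (V - {x}) E s z"
      by (rule reach_mono) (use nonseparableD(1)[OF B] in blast)
    with that P nonseparableD(1)[OF B] show ?thesis
      by blast
  qed
  then have "B \<subseteq> set (x # xs)"
    using xs(2) by auto
  moreover have "ind E (set (x # xs)) = path_edges (x # xs)"
    using xs(2,3) by (simp add: Un_commute)
  ultimately have "B \<in> ind E (P \<union> {x})"
    using nonseparable_in_path_is_edge[OF B _ card xs(1)] xs(2) by (simp add: Un_commute)
  with pp show ?thesis
    unfolding pendant_cut_edge_def by blast
qed

definition nonpendant_blocks :: "'a set set" where
  "nonpendant_blocks = {B. block V E B \<and> \<not> pendant_cut_edge V E B}"

lemma finite_nonpendant_blocks: "finite nonpendant_blocks"
  unfolding nonpendant_blocks_def by (rule finite_blocks)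

lemma nonpendant_block_disjoint_pendant_path:
  assumes pp: "pendant_path V E x P" and B: "B \<in> nonpendant_blocks"
  shows "B \<inter> P = {}"
proof (rule ccontr)
  assume "B \<inter> P \<noteq> {}"
  then obtain z where z: "z \<in> B" "z \<in> P"
    by blast
  have block: "block V E B"
    using B by (simp add: nonpendant_blocks_def)
  obtain t where "adj E z t"
    using pp z(2) by (rule pendant_path_vertex_adj)
  with block z(1) obtain b where "b \<in> B" "b \<noteq> z"
    by (rule block_other_vertex)
  then have "pendant_cut_edge V E B"
    using pendant_cut_edge_if_meets_pendant_path[OF pp block_nonseparable[OF block] z]
      two_le_card_block[OF block z(1)] by blast
  with B show False
    by (simp add: nonpendant_blocks_def)
qed

lemma nonpendant_block_at_root_leaves_pendant_path:
  assumes pp: "pendant_path V E x P" and B: "B \<in> nonpendant_blocks" "x \<in> B"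
  obtains a where "a \<in> B" "a \<noteq> x" "a \<notin> P"
proof -
  obtain x1 where "adj E x x1"
    using pp by (rule pendant_path_root_adj)
  with B obtain a where "a \<in> B" "a \<noteq> x"
    by (auto simp: nonpendant_blocks_def elim: block_other_vertex)
  with nonpendant_block_disjoint_pendant_path[OF pp B(1)] that show ?thesis
    by blast
qed

lemma block_eq_at_pendant_root:
  assumes "kappa (V - {x}) E = 2" and pp: "pendant_path V E x P"
    and B1: "B1 \<in> nonpendant_blocks" "x \<in> B1"
    and B2: "block V E B2" "x \<in> B2" and b: "b \<in> B2" "b \<noteq> x" "b \<notin> P"
  shows "B1 = B2"
proof -
  have block: "block V E B1"
    using B1(1) by (simp add: nonpendant_blocks_def)
  obtain a where a: "a \<in> B1" "a \<noteq> x" "a \<notin> P"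
    using pp B1 by (rule nonpendant_block_at_root_leaves_pendant_path)
  have "P \<in> components (V - {x}) E"
    using pp by (simp add: pendant_path_def components_del_edges)
  then have "reach (V - {x}) E a b"
    using assms(1) a b block_subset[OF block] block_subset[OF B2(1)]
    by (intro reach_if_kappa_eq_2) auto
  with block B1(2) B2 a b show ?thesis
    by (intro block_eq_if_reach_avoiding)
qed

lemma card_nonpendant_blocks_at_pendant_root:
  assumes "kappa (V - {x}) E = 2" "pendant_path V E x P"
  shows "card {B \<in> nonpendant_blocks. x \<in> B} \<le> 1"
proof -
  have "B1 = B2"
    if B1: "B1 \<in> nonpendant_blocks" "x \<in> B1" and B2: "B2 \<in> nonpendant_blocks" "x \<in> B2"
    for B1 B2
  proof -
    obtain b where "b \<in> B2" "b \<noteq> x" "b \<notin> P"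
      using assms(2) B2 by (rule nonpendant_block_at_root_leaves_pendant_path)
    with assms B1 B2 show ?thesis
      by (intro block_eq_at_pendant_root) (auto simp: nonpendant_blocks_def)
  qed
  then show ?thesis
    using finite_nonpendant_blocks by (auto simp: card_le_Suc0_iff_eq)
qed

end

section \<open>Zero forcing and deficient vertices\<close>

lemma sum_card_eq_sum_card_containing:
  assumes "finite \<A>" "finite V" "\<And>A. A \<in> \<A> \<Longrightarrow> f A \<subseteq> V"
  shows "(\<Sum>A\<in>\<A>. card (f A)) = (\<Sum>x\<in>V. card {A \<in> \<A>. x \<in> f A})"
proof -
  have "card (f A) = (\<Sum>x\<in>V. if x \<in> f A then 1 else 0)" if "A \<in> \<A>" for A
    using assms(3)[OF that] assms(2) by (simp add: sum.If_cases Int_absorb1)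
  then have "(\<Sum>A\<in>\<A>. card (f A)) = (\<Sum>A\<in>\<A>. \<Sum>x\<in>V. if x \<in> f A then 1 else 0)"
    by simp
  also have "\<dots> = (\<Sum>x\<in>V. \<Sum>A\<in>\<A>. if x \<in> f A then 1 else 0)"
    by (rule sum.swap)
  also have "\<dots> = (\<Sum>x\<in>V. card {A \<in> \<A>. x \<in> f A})"
    using assms(1) by (simp add: sum.If_cases Int_def)
  finally show ?thesis .
qed

locale zero_forcing = finite_simple_graph +
  fixes S :: "'a set"
  assumes zero_forcing: "zero_forcing_set V E S"
begin

lemma S_subset: "S \<subseteq> V"
  using zero_forcing by (simp add: zero_forcing_set_def)

text \<open>Colouring in parallel rounds gives each vertex the round rank x in which it is
  coloured, and so orders the forces in time.\<close>

primrec stage :: "nat \<Rightarrow> 'a set" where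
  "stage 0 = S"
| "stage (Suc k) = stage k \<union>
     {w \<in> V. \<exists>u\<in>stage k. adj E u w \<and> (\<forall>z\<in>V. adj E u z \<and> z \<noteq> w \<longrightarrow> z \<in> stage k)}"

definition rank :: "'a \<Rightarrow> nat" where
  "rank x = (LEAST k. x \<in> stage k)"

definition forces :: "'a \<Rightarrow> 'a \<Rightarrow> bool" where
  "forces u y \<longleftrightarrow>
     adj E u y \<and> rank u < rank y \<and> (\<forall>z\<in>V. adj E u z \<and> z \<noteq> y \<longrightarrow> rank z < rank y)"

lemma stage_mono: "i \<le> j \<Longrightarrow> stage i \<subseteq> stage j"
  by (induction j) (auto simp: le_Suc_eq)

lemma forced_in_stage: "x \<in> forced V E S \<Longrightarrow> \<exists>k. x \<in> stage k"
proof (induction rule: forced.induct)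
  case (init x)
  then show ?case
    by (auto intro: exI[of _ 0])
next
  case (force u w)
  define N where "N = {z \<in> V. adj E u z \<and> z \<noteq> w}"
  obtain i where i: "u \<in> stage i"
    using force.IH by blast
  have "\<forall>z\<in>N. \<exists>k. z \<in> stage k"
    using force.IH by (auto simp: N_def)
  then obtain k where k: "\<And>z. z \<in> N \<Longrightarrow> z \<in> stage (k z)"
    by metis
  define K where "K = Max (insert i (k ` N))"
  have "finite N"
    using finite_vertices by (simp add: N_def)
  then have "i \<le> K" "\<And>z. z \<in> N \<Longrightarrow> k z \<le> K"
    by (auto simp: K_def)
  then have "u \<in> stage K" "\<forall>z\<in>V. adj E u z \<and> z \<noteq> w \<longrightarrow> z \<in> stage K"
    using i k stage_mono by (blast, fastforce simp: N_def)
  with force.hyps(2,3) have "w \<in> stage (Suc K)"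
    by auto
  then show ?case ..
qed

lemma in_stage_rank: "x \<in> V \<Longrightarrow> x \<in> stage (rank x)"
  using zero_forcing forced_in_stage unfolding zero_forcing_set_def rank_def
  by (metis LeastI)

lemma rank_le: "x \<in> stage k \<Longrightarrow> rank x \<le> k"
  unfolding rank_def by (rule Least_le)

lemma exists_forcer:
  assumes "x \<in> V" "x \<notin> S"
  obtains u where "u \<in> V" "forces u x"
proof -
  have x: "x \<in> stage (rank x)"
    using in_stage_rank[OF assms(1)] .
  with assms(2) obtain k where k: "rank x = Suc k"
    by (metis not0_implies_Suc stage.simps(1))
  have "x \<notin> stage k"
    using rank_le[of x k] k by auto
  with x k obtain u where u: "u \<in> stage k" "adj E u x"
    "\<forall>z\<in>V. adj E u z \<and> z \<noteq> x \<longrightarrow> z \<in> stage k"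
    by auto
  then have "forces u x"
    using k rank_le by (fastforce simp: forces_def less_Suc_eq_le)
  with u(2) that show ?thesis
    using adj_vertices by blast
qed

definition deficit :: "'a set \<Rightarrow> 'a set" where
  "deficit B = {y \<in> B. y \<in> S \<or> \<not> (\<exists>u\<in>B. forces u y)}"

lemma deficit_subset: "deficit B \<subseteq> B"
  by (auto simp: deficit_def)

lemma card_adj_le_card_deficit:
  assumes "B \<subseteq> V" "u \<in> deficit B" "y \<in> B" "forces u y"
    and earlier: "\<And>w. w \<in> B \<Longrightarrow> rank w < rank y \<Longrightarrow> w \<in> deficit B"
  shows "card {w \<in> B. adj (ind E B) u w} \<le> card (deficit B)"
proof -
  have fin: "finite (deficit B)"
    using assms(1) finite_vertices deficit_subset by (meson finite_subset)
  have "{w \<in> B. adj (ind E B) u w} \<subseteq> insert y (deficit B - {u})"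
  proof
    fix w
    assume w: "w \<in> {w \<in> B. adj (ind E B) u w}"
    then have "adj E u w"
      by (auto simp: adj_def ind_def)
    with assms(1,4) w earlier show "w \<in> insert y (deficit B - {u})"
      by (cases "w = y") (auto simp: forces_def adj_def)
  qed
  then have "card {w \<in> B. adj (ind E B) u w} \<le> card (insert y (deficit B - {u}))"
    using fin by (intro card_mono) auto
  also have "\<dots> \<le> Suc (card (deficit B - {u}))"
    using fin by (simp add: card_insert_if)
  also have "\<dots> = card (deficit B)"
    using fin assms(2) by (rule card_Suc_Diff1)
  finally show ?thesis .
qed

lemma min_degree_le_card_deficit:
  assumes "B \<subseteq> V" "B \<noteq> {}"
  shows "min_degree B (ind E B) \<le> card (deficit B)"
proof -
  have fin: "finite B"
    using assms(1) finite_vertices finite_subset by blast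
  have min: "min_degree B (ind E B) \<le> card {w \<in> B. adj (ind E B) u w}" if "u \<in> B" for u
    unfolding min_degree_def using fin that by (intro Min_le) auto
  define J where "J = B - deficit B"
  show ?thesis
  proof (cases "J = {}")
    case True
    then have "deficit B = B"
      using deficit_subset by (auto simp: J_def)
    obtain u where "u \<in> B"
      using assms(2) by blast
    with min have "min_degree B (ind E B) \<le> card {w \<in> B. adj (ind E B) u w}"
      by blast
    also have "\<dots> \<le> card (deficit B)"
      using fin \<open>deficit B = B\<close> by (intro card_mono) auto
    finally show ?thesis .
  next
    case False
    obtain y where y: "y \<in> J" "\<And>y'. y' \<in> J \<Longrightarrow> rank y \<le> rank y'"
      using ex_has_least_nat[of "\<lambda>y. y \<in> J" _ rank] False by blast
    then obtain u where u: "u \<in> B" "forces u y"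
      by (auto simp: J_def deficit_def)
    have earlier: "w \<in> deficit B" if "w \<in> B" "rank w < rank y" for w
      using that y(2)[of w] by (auto simp: J_def)
    then have "u \<in> deficit B"
      using u by (simp add: forces_def)
    with assms(1) y(1) u earlier have "card {w \<in> B. adj (ind E B) u w} \<le> card (deficit B)"
      by (intro card_adj_le_card_deficit) (auto simp: J_def)
    with min[OF u(1)] show ?thesis
      by linarith
  qed
qed

section \<open>Counting deficient vertices\<close>

definition deficit_count :: "'a \<Rightarrow> nat" where
  "deficit_count x = card {B \<in> nonpendant_blocks. x \<in> deficit B}"

lemma sum_card_deficit:
  "(\<Sum>B\<in>nonpendant_blocks. card (deficit B)) = (\<Sum>x\<in>V. deficit_count x)"
  unfolding deficit_count_def using finite_nonpendant_blocks finite_vertices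
  by (rule sum_card_eq_sum_card_containing)
    (use deficit_subset in \<open>auto simp: nonpendant_blocks_def dest!: block_subset\<close>)

lemma deficit_count_le_mu:
  assumes "x \<in> V"
  shows "int (deficit_count x) \<le> int (mu V E x) - 1 + of_bool (x \<in> S)"
proof -
  let ?blocks = "{B. block V E B \<and> x \<in> B}"
  have sub: "{B \<in> nonpendant_blocks. x \<in> deficit B} \<subseteq> ?blocks"
    using deficit_subset by (auto simp: nonpendant_blocks_def)
  show ?thesis
  proof (cases "x \<in> S")
    case True
    have "deficit_count x \<le> mu V E x"
      unfolding deficit_count_def mu_def using sub finite_blocks by (rule card_mono[rotated])
    with True show ?thesis
      by simp
  next
    case False
    obtain u where "u \<in> V" "forces u x"
      using assms False by (rule exists_forcer)
    then obtain B0 where B0: "block V E B0" "{u, x} \<subseteq> B0"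
      by (auto simp: forces_def intro: exists_block_superset[OF nonseparable_edge])
    with \<open>forces u x\<close> False have "x \<notin> deficit B0"
      by (auto simp: deficit_def)
    then have "{B \<in> nonpendant_blocks. x \<in> deficit B} \<subseteq> ?blocks - {B0}"
      using sub by blast
    then have "deficit_count x \<le> card (?blocks - {B0})"
      unfolding deficit_count_def using finite_blocks by (intro card_mono) auto
    also have "\<dots> < mu V E x"
      unfolding mu_def using B0 finite_blocks by (intro card_Diff1_less) auto
    finally show ?thesis
      using False by simp
  qed
qed

lemma deficit_count_on_pendant_path:
  assumes "pendant_path V E x P" "z \<in> P"
  shows "deficit_count z = 0"
proof -
  have "{B \<in> nonpendant_blocks. z \<in> deficit B} = {}"
    using nonpendant_block_disjoint_pendant_path[OF assms(1)] deficit_subset assms(2) by blast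
  then show ?thesis
    unfolding deficit_count_def by (metis card.empty)
qed

lemma deficit_count_at_pendant_root:
  assumes "kappa (V - {x}) E = 2" "pendant_path V E x P"
  shows "deficit_count x \<le> 1"
proof -
  have "deficit_count x \<le> card {B \<in> nonpendant_blocks. x \<in> B}"
    unfolding deficit_count_def using finite_nonpendant_blocks deficit_subset
    by (intro card_mono) auto
  with card_nonpendant_blocks_at_pendant_root[OF assms] show ?thesis
    by simp
qed

lemma rank_pendant_root_less:
  assumes pp: "pendant_path V E x P" and "S \<inter> P = {}" and "y \<in> P"
  shows "rank x < rank y"
  using \<open>y \<in> P\<close>
proof (induction "rank y" arbitrary: y rule: less_induct)
  case less
  have y: "y \<in> V" "y \<notin> S" "y \<noteq> x"
    using less.prems pendant_path_subset[OF pp] assms(2) by auto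
  obtain u where u: "u \<in> V" "forces u y"
    using y(1,2) by (rule exists_forcer)
  show ?case
  proof (cases "u = x")
    case False
    have "reach (V - {x}) E y u"
      using u y False by (intro reach_edge) (auto simp: forces_def adj_commute)
    then have "u \<in> P"
      using pendant_path_component[OF pp less.prems] u(1) False by blast
    with less.hyps u(2) show ?thesis
      by (fastforce simp: forces_def)
  qed (use u in \<open>simp add: forces_def\<close>)
qed

end

locale connected_zero_forcing = zero_forcing +
  assumes connected_S: "connected_graph S (ind E S)"
begin

lemma S_nonempty: "S \<noteq> {}"
  using connected_S by (simp add: connected_graph_def)

lemma S_subset_pendant_path:
  assumes "pendant_path V E x P" "s \<in> S" "s \<in> P" "x \<notin> S"
  shows "S \<subseteq> P"
proof
  fix s'
  assume "s' \<in> S"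
  with assms(2) connected_S have "reach S E s s'"
    by (simp add: connected_graph_def reach_ind)
  then have "reach (V - {x}) E s s'"
    by (rule reach_mono) (use S_subset assms(4) in blast)
  with \<open>s' \<in> S\<close> S_subset assms(4) show "s' \<in> P"
    using pendant_path_component[OF assms(1,3)] by blast
qed

lemma S_subset_pendant_path_if_deficit:
  assumes k: "kappa (V - {x}) E = 2" and pp: "pendant_path V E x P"
    and "x \<in> V" "x \<notin> S" "1 \<le> deficit_count x"
  shows "S \<subseteq> P"
proof -
  obtain B1 where B1: "B1 \<in> nonpendant_blocks" "x \<in> deficit B1"
    using assms(5) by (auto simp: deficit_count_def card_gt_0_iff Suc_le_eq)
  obtain u where u: "u \<in> V" "forces u x"
    using assms(3,4) by (rule exists_forcer)
  then obtain B0 where B0: "block V E B0" "{u, x} \<subseteq> B0"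
    by (auto simp: forces_def intro: exists_block_superset[OF nonseparable_edge])
  have "u \<noteq> x"
    using u(2) by (auto simp: forces_def adj_def)
  have "u \<in> P"
  proof (rule ccontr)
    assume "u \<notin> P"
    with k pp B1 B0 \<open>u \<noteq> x\<close> have "B1 = B0"
      using deficit_subset by (intro block_eq_at_pendant_root) auto
    with B0 B1(2) u(2) assms(4) show False
      by (auto simp: deficit_def)
  qed
  moreover have "\<not> rank x < rank u"
    using u(2) by (simp add: forces_def)
  ultimately obtain s where "s \<in> S" "s \<in> P"
    using rank_pendant_root_less[OF pp] by blast
  with pp assms(4) show ?thesis
    using S_subset_pendant_path by blast
qed

lemma pendant_root_unique:
  assumes pp: "pendant_path V E x P" and pp': "pendant_path V E x' P'"
    and "S \<subseteq> P" "S \<subseteq> P'" and "1 \<le> deficit_count x" "1 \<le> deficit_count x'"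
  shows "x = x'"
proof (rule ccontr)
  assume "x \<noteq> x'"
  have "x' \<notin> P"
    using deficit_count_on_pendant_path[OF pp] assms(6) by fastforce
  obtain s where s: "s \<in> S"
    using S_nonempty by blast
  obtain x1 where x1: "x1 \<in> P" "adj E x x1"
    using pp by (rule pendant_path_root_adj)
  have P: "P = {w \<in> V - {x}. reach (V - {x}) E s w}"
    using pendant_path_component[OF pp] s assms(3) by blast
  with x1(1) have "reach P E s x1"
    using reach_in_component[of "V - {x}" E s x1] by simp
  then have "reach (V - {x'}) E s x1"
    by (rule reach_mono) (use pendant_path_subset[OF pp] \<open>x' \<notin> P\<close> in blast)
  then have "reach (V - {x'}) E s x"
    by (rule reach_step)
      (use x1 pendant_path_subset[OF pp] pendant_path_root[OF pp] \<open>x' \<notin> P\<close> \<open>x \<noteq> x'\<close>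
        in \<open>auto simp: adj_commute\<close>)
  then have "x \<in> P'"
    using pendant_path_component[OF pp'] s assms(4) pendant_path_root[OF pp] \<open>x \<noteq> x'\<close> by blast
  with deficit_count_on_pendant_path[OF pp'] assms(5) show False
    by simp
qed

definition R :: "'a set" where
  "R = {v \<in> V. kappa (V - {v}) (del_edges E v) = 2 \<and> num_pendant_paths V E v = 0}
     \<union> {v \<in> V. kappa (V - {v}) (del_edges E v) \<ge> 3}"

definition weight :: "'a \<Rightarrow> int" where
  "weight x = of_bool (x \<in> S) + (if x \<in> R then int (mu V E x) - 1 else 0)"

definition absorbing_roots :: "'a set" where
  "absorbing_roots = {x \<in> V - S. 1 \<le> deficit_count x \<and> (\<exists>P. pendant_path V E x P \<and> S \<subseteq> P)}"

lemma absorbing_roots_subset: "absorbing_roots \<subseteq> V"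
  by (auto simp: absorbing_roots_def)

lemma deficit_count_le_weight:
  assumes "x \<in> V"
  shows "int (deficit_count x) \<le> weight x + of_bool (x \<in> absorbing_roots)"
proof (cases "x \<in> R")
  case True
  then have "weight x = int (mu V E x) - 1 + of_bool (x \<in> S)"
    by (simp add: weight_def)
  moreover have "0 \<le> (of_bool (x \<in> absorbing_roots) :: int)"
    by simp
  ultimately show ?thesis
    using deficit_count_le_mu[OF assms] by linarith
next
  case False
  then have "kappa (V - {x}) E \<le> 1 \<or> (kappa (V - {x}) E = 2 \<and> num_pendant_paths V E x \<noteq> 0)"
    using assms by (auto simp: R_def kappa_del_edges)
  moreover have "\<exists>P. pendant_path V E x P" if "num_pendant_paths V E x \<noteq> 0"
    using that unfolding num_pendant_paths_def by (metis card.empty empty_Collect_eq)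
  ultimately consider "kappa (V - {x}) E \<le> 1"
    | P where "kappa (V - {x}) E = 2" "pendant_path V E x P"
    by blast
  then show ?thesis
  proof cases
    case 1
    with deficit_count_le_mu[OF assms] mu_le_1_if_kappa_le_1[OF assms] False show ?thesis
      by (simp add: weight_def)
  next
    case (2 P)
    then have "deficit_count x \<le> 1"
      by (rule deficit_count_at_pendant_root)
    moreover have "x \<in> absorbing_roots" if "x \<notin> S" "1 \<le> deficit_count x"
      using S_subset_pendant_path_if_deficit[OF 2 assms that] 2(2) assms that
      by (auto simp: absorbing_roots_def)
    ultimately show ?thesis
      using False by (cases "x \<in> S"; cases "deficit_count x") (auto simp: weight_def)
  qed
qed

lemma card_absorbing_roots_le_1: "card absorbing_roots \<le> 1"
proof -
  have "finite absorbing_roots"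
    using finite_vertices by (simp add: absorbing_roots_def)
  moreover have "x = x'" if "x \<in> absorbing_roots" "x' \<in> absorbing_roots" for x x'
    using that pendant_root_unique by (auto simp: absorbing_roots_def)
  ultimately show ?thesis
    by (auto simp: card_le_Suc0_iff_eq)
qed

lemma sum_deficit_count_le_sum_weight:
  "(\<Sum>x\<in>V. int (deficit_count x)) \<le> (\<Sum>x\<in>V. weight x)"
proof (cases "absorbing_roots = {}")
  case True
  with deficit_count_le_weight show ?thesis
    by (intro sum_mono) simp
next
  case False
  then obtain r P where "pendant_path V E r P" "S \<subseteq> P"
    by (auto simp: absorbing_roots_def)
  then have S: "deficit_count s = 0" if "s \<in> S" for s
    using that deficit_count_on_pendant_path by blast
  have "int (deficit_count x) \<le> weight x + of_bool (x \<in> absorbing_roots) - of_bool (x \<in> S)"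
    if "x \<in> V" for x
    using deficit_count_le_weight[OF that] S[of x] mu_ge_1[OF that]
    by (cases "x \<in> S") (auto simp: weight_def)
  then have "(\<Sum>x\<in>V. int (deficit_count x))
      \<le> (\<Sum>x\<in>V. weight x + of_bool (x \<in> absorbing_roots) - of_bool (x \<in> S))"
    by (rule sum_mono)
  also have "\<dots> = (\<Sum>x\<in>V. weight x) + (\<Sum>x\<in>V. of_bool (x \<in> absorbing_roots))
      - (\<Sum>x\<in>V. of_bool (x \<in> S))"
    by (simp only: sum_subtractf sum.distrib)
  also have "\<dots> = (\<Sum>x\<in>V. weight x) + int (card absorbing_roots) - int (card S)"
    using finite_vertices absorbing_roots_subset S_subset by (simp add: Int_absorb1)
  also have "\<dots> \<le> (\<Sum>x\<in>V. weight x)"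
  proof -
    have "1 \<le> card S"
      using S_nonempty S_subset finite_vertices by (simp add: Suc_le_eq card_gt_0_iff finite_subset)
    with card_absorbing_roots_le_1 show ?thesis
      by linarith
  qed
  finally show ?thesis .
qed

lemma sum_weight: "(\<Sum>x\<in>V. weight x) = int (card S) + (\<Sum>p\<in>R. int (mu V E p) - 1)"
proof -
  have "R \<subseteq> V"
    by (auto simp: R_def)
  with S_subset finite_vertices show ?thesis
    by (simp add: weight_def sum.distrib sum.If_cases Int_absorb1)
qed

lemma sum_min_degree_le:
  "(\<Sum>B\<in>nonpendant_blocks. int (min_degree B (ind E B))) \<le> int (card S) + (\<Sum>p\<in>R. int (mu V E p) - 1)"
proof -
  have "(\<Sum>B\<in>nonpendant_blocks. int (min_degree B (ind E B)))
      \<le> (\<Sum>B\<in>nonpendant_blocks. int (card (deficit B)))"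
    by (intro sum_mono)
      (auto simp: nonpendant_blocks_def block_def nonseparable_iff min_degree_le_card_deficit)
  also have "\<dots> = (\<Sum>x\<in>V. int (deficit_count x))"
    using sum_card_deficit by (metis of_nat_sum)
  also have "\<dots> \<le> (\<Sum>x\<in>V. weight x)"
    by (rule sum_deficit_count_le_sum_weight)
  finally show ?thesis
    by (simp add: sum_weight)
qed

end

lemma forced_vertices: "forced V E V = V"
proof
  show "forced V E V \<subseteq> V"
    by (auto elim: forced.induct)
qed (auto intro: forced.init)

lemma Zc_attained:
  assumes "connected_graph V E"
  obtains S where "zero_forcing_set V E S" "connected_graph S (ind E S)" "card S = Zc V E"
proof -
  let ?P = "\<lambda>k. \<exists>S. zero_forcing_set V E S \<and> connected_graph S (ind E S) \<and> card S = k"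
  have "zero_forcing_set V E V" "connected_graph V (ind E V)"
    using assms
    by (simp_all add: zero_forcing_set_def forced_vertices connected_graph_def reach_ind)
  then have "?P (card V)"
    by blast
  then have "?P (Zc V E)"
    unfolding Zc_def by (rule LeastI)
  with that show ?thesis
    by blast
qed

theorem corollary1:
  fixes V :: "'a set" and E :: "'a set set"
  assumes "simple_graph V E" and "connected_graph V E"
  defines "\<B> \<equiv> {B. block V E B \<and> \<not> pendant_cut_edge V E B}"
      and "R2 \<equiv> {v \<in> V. kappa (V - {v}) (del_edges E v) = 2 \<and> num_pendant_paths V E v = 0}"
      and "R3 \<equiv> {v \<in> V. kappa (V - {v}) (del_edges E v) \<ge> 3}"
  shows "int (Zc V E) \<ge> (\<Sum>B\<in>\<B>. int (min_degree B (ind E B)))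
                         - (\<Sum>p\<in>R2 \<union> R3. int (mu V E p) - 1)"
proof -
  obtain S where S: "zero_forcing_set V E S" "connected_graph S (ind E S)" "card S = Zc V E"
    using assms(2) by (rule Zc_attained)
  interpret connected_zero_forcing V E S
    using assms(1) S(1,2) by unfold_locales
  have "\<B> = nonpendant_blocks" "R2 \<union> R3 = R"
    by (simp_all add: \<B>_def nonpendant_blocks_def R2_def R3_def R_def)
  with sum_min_degree_le S(3) show ?thesis
    by simp
qed

end
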